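(* Let $A:\Omega\to\mathbb C^{d\times d}$, $b,c:\Omega\to\mathbb C^d$, $V:\Omega\to\mathbb R_+$ and $p>1$, $q=p/(p-1)$. Suppose that $\Gamma_p^{A,b,c,V}(x,\xi)\ge0$ for almost all $x\in\Omega$ and all $\xi\in\mathbb C^d$. Then for almost all $x\in\Omega$ and all $\alpha,\beta\in\mathbb R^d$, $$\tfrac{4}{pq}\langle \Re A(x)\alpha,\alpha\rangle+\langle\Re A(x)\beta,\beta\rangle+2\langle(p^{-1}\Im A(x)+q^{-1}\Im A(x)^* )\alpha,\beta\rangle+\langle\Im(b(x)+c(x)),\beta\rangle+2\Big\langle\Re\Big(\tfrac{b(x)}p+\tfrac{c(x)}q\Big),\alpha\Big\rangle+V(x)\ge0,$$ i.e. the Cialdea–Maz'ya condition holds with $\theta=\nu=1$.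
   Context: $\Omega\subseteq\mathbb R^d$ open. On $\mathbb C^d$, $\langle \xi,\sigma\rangle=\sum_j\xi_j\overline{\sigma_j}$; in the displayed inequality the brackets are the real inner product on $\mathbb R^d$, and $\Re A,\Im A$ denote the entrywise real and imaginary parts of the matrix, $A^*$ its conjugate transpose, and $\Re,\Im$ of vectors are taken componentwise. $\mathcal{J}_p\xi=\frac p2(\xi+(1-\frac2p)\overline\xi)$ and $\Gamma_p^{A,b,c,V}(x,\xi)=\Re\langle A(x)\xi,\mathcal J_p\xi\rangle+\Re\langle b(x)+\mathcal J_pc(x),\xi\rangle+V(x)$. *)

theory Defs
  imports "HOL-Analysis.Analysis"
begin

definition cinner :: "complex ^ 'n \<Rightarrow> complex ^ 'n \<Rightarrow> complex" where
  "cinner \<xi> \<sigma> = (\<Sum>j\<in>UNIV. \<xi> $ j * cnj (\<sigma> $ j))"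

definition Jp :: "real \<Rightarrow> complex ^ 'n \<Rightarrow> complex ^ 'n" where
  "Jp p \<xi> = (\<chi> j. complex_of_real (p / 2) *
      (\<xi> $ j + complex_of_real (1 - 2 / p) * cnj (\<xi> $ j)))"

definition Gamma_p ::
  "real \<Rightarrow> ('x \<Rightarrow> complex ^ 'n ^ 'n) \<Rightarrow> ('x \<Rightarrow> complex ^ 'n) \<Rightarrow> ('x \<Rightarrow> complex ^ 'n)
    \<Rightarrow> ('x \<Rightarrow> real) \<Rightarrow> 'x \<Rightarrow> complex ^ 'n \<Rightarrow> real" where
  "Gamma_p p A b c V x \<xi> =
     Re (cinner (A x *v \<xi>) (Jp p \<xi>)) + Re (cinner (b x + Jp p (c x)) \<xi>) + V x"

definition mat_Re :: "complex ^ 'n ^ 'm \<Rightarrow> real ^ 'n ^ 'm" where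
  "mat_Re M = (\<chi> i j. Re (M $ i $ j))"

definition mat_Im :: "complex ^ 'n ^ 'm \<Rightarrow> real ^ 'n ^ 'm" where
  "mat_Im M = (\<chi> i j. Im (M $ i $ j))"

definition conj_transpose :: "complex ^ 'n ^ 'm \<Rightarrow> complex ^ 'm ^ 'n" where
  "conj_transpose M = (\<chi> i j. cnj (M $ j $ i))"

definition vec_Re :: "complex ^ 'n \<Rightarrow> real ^ 'n" where
  "vec_Re v = (\<chi> i. Re (v $ i))"

definition vec_Im :: "complex ^ 'n \<Rightarrow> real ^ 'n" where
  "vec_Im v = (\<chi> i. Im (v $ i))"

end

theory Submission
  imports Defs
begin

text \<open>Since \<open>\<J>\<^sub>p\<xi> = (p - 1) Re \<xi> + i Im \<xi>\<close>, the form \<open>\<Gamma>\<^sub>p(x, \<xi>)\<close> is a real quadratic polynomial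
  in \<open>(Re \<xi>, Im \<xi>)\<close>. Evaluated at \<open>\<xi> = (2/p) \<alpha> + i \<beta>\<close> it is, term by term, the Cialdea--Maz'ya
  expression, so the latter inherits the nonnegativity of \<open>\<Gamma>\<^sub>p\<close> at every point where that holds.\<close>

definition complex_vec :: "real ^ 'n \<Rightarrow> real ^ 'n \<Rightarrow> complex ^ 'n" where
  "complex_vec u v = (\<chi> j. Complex (u $ j) (v $ j))"

lemma vec_Re_complex_vec [simp]: "vec_Re (complex_vec u v) = u"
  by (simp add: vec_Re_def complex_vec_def)

lemma vec_Im_complex_vec [simp]: "vec_Im (complex_vec u v) = v"
  by (simp add: vec_Im_def complex_vec_def)

lemma vec_Re_add [simp]: "vec_Re (x + y) = vec_Re x + vec_Re y"
  by (simp add: vec_Re_def vec_eq_iff)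

lemma vec_Im_add [simp]: "vec_Im (x + y) = vec_Im x + vec_Im y"
  by (simp add: vec_Im_def vec_eq_iff)

lemma vec_Re_scaleR [simp]: "vec_Re (r *\<^sub>R x) = r *\<^sub>R vec_Re x"
  by (simp add: vec_Re_def vec_eq_iff)

lemma vec_Im_scaleR [simp]: "vec_Im (r *\<^sub>R x) = r *\<^sub>R vec_Im x"
  by (simp add: vec_Im_def vec_eq_iff)

lemma vec_Re_matrix_vector_mult:
  "vec_Re (M *v x) = mat_Re M *v vec_Re x - mat_Im M *v vec_Im x"
  by (simp add: vec_Re_def vec_Im_def mat_Re_def mat_Im_def matrix_vector_mult_def
      vec_eq_iff Re_sum sum_subtractf)

lemma vec_Im_matrix_vector_mult:
  "vec_Im (M *v x) = mat_Re M *v vec_Im x + mat_Im M *v vec_Re x"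
  by (simp add: vec_Re_def vec_Im_def mat_Re_def mat_Im_def matrix_vector_mult_def
      vec_eq_iff Im_sum sum.distrib)

lemma Re_cinner: "Re (cinner x y) = vec_Re x \<bullet> vec_Re y + vec_Im x \<bullet> vec_Im y"
  by (simp add: cinner_def vec_Re_def vec_Im_def inner_vec_def Re_sum sum.distrib)

lemma vec_Re_Jp: "p \<noteq> 0 \<Longrightarrow> vec_Re (Jp p x) = (p - 1) *\<^sub>R vec_Re x"
  by (simp add: Jp_def vec_Re_def vec_eq_iff field_simps)

lemma vec_Im_Jp: "p \<noteq> 0 \<Longrightarrow> vec_Im (Jp p x) = vec_Im x"
  by (simp add: Jp_def vec_Im_def vec_eq_iff field_simps)

lemma mat_Im_conj_transpose: "mat_Im (conj_transpose M) = - transpose (mat_Im M)"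
  by (simp add: mat_Im_def conj_transpose_def transpose_def vec_eq_iff)

lemma Gamma_p_real_form:
  assumes "p \<noteq> 0"
  shows "Gamma_p p A b c V x \<xi> =
      (p - 1) * ((mat_Re (A x) *v vec_Re \<xi>) \<bullet> vec_Re \<xi>)
    + (mat_Re (A x) *v vec_Im \<xi>) \<bullet> vec_Im \<xi>
    + (mat_Im (A x) *v vec_Re \<xi>) \<bullet> vec_Im \<xi>
    - (p - 1) * ((mat_Im (A x) *v vec_Im \<xi>) \<bullet> vec_Re \<xi>)
    + (vec_Re (b x) + (p - 1) *\<^sub>R vec_Re (c x)) \<bullet> vec_Re \<xi>
    + vec_Im (b x + c x) \<bullet> vec_Im \<xi>
    + V x"
  using assms
  by (simp add: Gamma_p_def Re_cinner vec_Re_Jp vec_Im_Jp vec_Re_matrix_vector_mult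
      vec_Im_matrix_vector_mult algebra_simps)

lemma Gamma_p_complex_vec:
  assumes p: "p > 1" and q: "q = p / (p - 1)"
  shows "Gamma_p p A b c V x (complex_vec ((2 / p) *\<^sub>R \<alpha>) \<beta>) =
           4 / (p * q) * ((mat_Re (A x) *v \<alpha>) \<bullet> \<alpha>)
         + (mat_Re (A x) *v \<beta>) \<bullet> \<beta>
         + 2 * ((((1 / p) *\<^sub>R mat_Im (A x) + (1 / q) *\<^sub>R mat_Im (conj_transpose (A x))) *v \<alpha>) \<bullet> \<beta>)
         + (vec_Im (b x + c x) \<bullet> \<beta>)
         + 2 * (vec_Re ((1 / p) *\<^sub>R b x + (1 / q) *\<^sub>R c x) \<bullet> \<alpha>)
         + V x"
proof -
  have q_inv: "1 / q = (p - 1) / p"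
    using p unfolding q by simp
  have "(transpose (mat_Im (A x)) *v \<alpha>) \<bullet> \<beta> = (mat_Im (A x) *v \<beta>) \<bullet> \<alpha>"
    by (metis dot_lmul_matrix inner_commute transpose_matrix_vector)
  then have Im_part: "(((1 / p) *\<^sub>R mat_Im (A x) + (1 / q) *\<^sub>R mat_Im (conj_transpose (A x))) *v \<alpha>) \<bullet> \<beta>
      = (1 / p) * ((mat_Im (A x) *v \<alpha>) \<bullet> \<beta>) - ((p - 1) / p) * ((mat_Im (A x) *v \<beta>) \<bullet> \<alpha>)"
    by (simp add: q_inv mat_Im_conj_transpose matrix_vector_mult_diff_rdistrib
        scaleR_matrix_vector_assoc[symmetric] inner_diff_left)
  have Re_part: "vec_Re ((1 / p) *\<^sub>R b x + (1 / q) *\<^sub>R c x) \<bullet> \<alpha>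
      = (1 / p) * (vec_Re (b x) \<bullet> \<alpha>) + ((p - 1) / p) * (vec_Re (c x) \<bullet> \<alpha>)"
    by (simp add: q_inv inner_add_left)
  have weight: "4 / (p * q) = (p - 1) * (2 / p) * (2 / p)"
    using p unfolding q by (simp add: field_simps)
  show ?thesis
    using p unfolding Im_part Re_part weight
    by (simp add: Gamma_p_real_form matrix_vector_mult_scaleR inner_add_left inner_diff_left
        field_simps)
qed

theorem proposition5p4:
  fixes \<Omega> :: "(real ^ 'n) set"
    and A :: "real ^ 'n \<Rightarrow> complex ^ 'n ^ 'n"
    and b c :: "real ^ 'n \<Rightarrow> complex ^ 'n"
    and V :: "real ^ 'n \<Rightarrow> real"
    and p q :: real
  assumes "open \<Omega>"
    and "\<And>x. x \<in> \<Omega> \<Longrightarrow> V x \<ge> 0"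
    and "p > 1"
    and "q = p / (p - 1)"
    and "AE x in lebesgue. x \<in> \<Omega> \<longrightarrow> (\<forall>\<xi>. Gamma_p p A b c V x \<xi> \<ge> 0)"
  shows "AE x in lebesgue. x \<in> \<Omega> \<longrightarrow> (\<forall>\<alpha> \<beta> :: real ^ 'n.
           4 / (p * q) * ((mat_Re (A x) *v \<alpha>) \<bullet> \<alpha>)
         + (mat_Re (A x) *v \<beta>) \<bullet> \<beta>
         + 2 * ((((1 / p) *\<^sub>R mat_Im (A x) + (1 / q) *\<^sub>R mat_Im (conj_transpose (A x))) *v \<alpha>) \<bullet> \<beta>)
         + (vec_Im (b x + c x) \<bullet> \<beta>)
         + 2 * (vec_Re ((1 / p) *\<^sub>R b x + (1 / q) *\<^sub>R c x) \<bullet> \<alpha>)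
         + V x \<ge> 0)"
  using assms(5)
proof (rule eventually_mono, intro impI allI)
  fix x \<alpha> \<beta>
  assume "x \<in> \<Omega> \<longrightarrow> (\<forall>\<xi>. Gamma_p p A b c V x \<xi> \<ge> 0)" and "x \<in> \<Omega>"
  then have "Gamma_p p A b c V x (complex_vec ((2 / p) *\<^sub>R \<alpha>) \<beta>) \<ge> 0"
    by blast
  then show "4 / (p * q) * ((mat_Re (A x) *v \<alpha>) \<bullet> \<alpha>)
         + (mat_Re (A x) *v \<beta>) \<bullet> \<beta>
         + 2 * ((((1 / p) *\<^sub>R mat_Im (A x) + (1 / q) *\<^sub>R mat_Im (conj_transpose (A x))) *v \<alpha>) \<bullet> \<beta>)
         + (vec_Im (b x + c x) \<bullet> \<beta>)
         + 2 * (vec_Re ((1 / p) *\<^sub>R b x + (1 / q) *\<^sub>R c x) \<bullet> \<alpha>)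
         + V x \<ge> 0"
    by (simp only: Gamma_p_complex_vec[OF assms(3,4)])
qed

end
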